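(* Suppose $m=n$, $\Xi=\{\boldsymbol{\xi}\in\mathbb{R}^m:(\boldsymbol{\xi}-\boldsymbol{\xi}_0)^{\top}\boldsymbol{W}^{-1}(\boldsymbol{\xi}-\boldsymbol{\xi}_0)\le1\}$ with $\boldsymbol{W}\succ0$, and $f_t(\boldsymbol{x},\boldsymbol{\xi})=\boldsymbol{\xi}^{\top}\boldsymbol{x}+\langle\boldsymbol{A}^t,\boldsymbol{\xi}\boldsymbol{\xi}^{\top}\rangle+(\boldsymbol{b}^t)^{\top}\boldsymbol{x}+h^t$ for all $t\in[T]$, where $\boldsymbol{A}^t\succeq0$, $\boldsymbol{b}^t\in\mathbb{R}^n$, $h^t\in\mathbb{R}$. Let $\tilde Z_{C_2}$ be the set of $\boldsymbol{x}\in\mathbb{R}^n$ for which there exist $\alpha_t>0$, $q_{it}\ge0$, $\boldsymbol{v}_{it}\in\mathbb{R}^m$ ($i\in[N],t\in[T]$) with, for all $i,t$, $\|\boldsymbol{v}_{it}\|_*\delta+\frac1N\sum_{j=1}^Nq_{jt}\le\epsilon\alpha_t$ and $\sup_{\boldsymbol{\xi}\in\Xi}[\boldsymbol{v}_{it}^{\top}\boldsymbol{\xi}-f_t(\boldsymbol{x},\boldsymbol{\xi})]+\alpha_t-\boldsymbol{v}_{it}^{\top}\boldsymbol{\zeta}^i-q_{it}\le0$. Then $\tilde Z_{C_2}$ equals the set of $\boldsymbol{x}\in\mathbb{R}^n$ for which there exist $\alpha_t>0$, $q_{it}\ge0$, $\boldsymbol{v}_{it}\in\mathbb{R}^m$,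 $u_{it}\in\mathbb{R}$, $\nu_{it}\ge0$ such that for all $i\in[N],t\in[T]$: $$\|\boldsymbol{v}_{it}\|_*\delta+\frac1N\sum_{j=1}^Nq_{jt}\le\epsilon\alpha_t,\qquad u_{it}-[(\boldsymbol{b}^t)^{\top}\boldsymbol{x}+h^t]+\alpha_t-\boldsymbol{v}_{it}^{\top}\boldsymbol{\zeta}^i\le q_{it},$$ $$\begin{bmatrix}\boldsymbol{A}^t+\nu_{it}\boldsymbol{W}^{-1}&-\frac12(2\nu_{it}\boldsymbol{W}^{-1}\boldsymbol{\xi}_0+\boldsymbol{v}_{it}-\boldsymbol{x})\\-\frac12(2\nu_{it}\boldsymbol{W}^{-1}\boldsymbol{\xi}_0+\boldsymbol{v}_{it}-\boldsymbol{x})^{\top}&u_{it}+\nu_{it}\boldsymbol{\xi}_0^{\top}\boldsymbol{W}^{-1}\boldsymbol{\xi}_0-\nu_{it}\end{bmatrix}\succeq0.$$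
   Context: Setting: $\epsilon\in(0,1)$, $\delta>0$, $[T]=\{1,\dots,T\}$; $\boldsymbol{\zeta}^1,\dots,\boldsymbol{\zeta}^N\in\Xi$ given samples; $\|\cdot\|_*$ is the dual norm of a norm on $\mathbb{R}^m$; $\langle\boldsymbol{X},\boldsymbol{Y}\rangle=\mathrm{tr}(\boldsymbol{X}\boldsymbol{Y})$; $\succeq0$ ($\succ0$) denotes positive semidefinite (definite). *)

theory Defs
  imports "HOL-Analysis.Analysis"
begin

definition is_norm :: "(real^'n \<Rightarrow> real) \<Rightarrow> bool" where
  "is_norm nrm \<longleftrightarrow>
     (\<forall>x. 0 \<le> nrm x) \<and> (\<forall>x. nrm x = 0 \<longleftrightarrow> x = 0) \<and>
     (\<forall>c x. nrm (c *\<^sub>R x) = \<bar>c\<bar> * nrm x) \<and>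
     (\<forall>x y. nrm (x + y) \<le> nrm x + nrm y)"

definition dual_norm :: "(real^'n \<Rightarrow> real) \<Rightarrow> real^'n \<Rightarrow> real" where
  "dual_norm nrm v = (SUP x\<in>{x. nrm x \<le> 1}. v \<bullet> x)"

definition psd :: "real^'k^'k \<Rightarrow> bool" where
  "psd M \<longleftrightarrow> transpose M = M \<and> (\<forall>x. 0 \<le> x \<bullet> (M *v x))"

definition pd :: "real^'k^'k \<Rightarrow> bool" where
  "pd M \<longleftrightarrow> transpose M = M \<and> (\<forall>x. x \<noteq> 0 \<longrightarrow> 0 < x \<bullet> (M *v x))"

definition outer :: "real^'n \<Rightarrow> real^'n \<Rightarrow> real^'n^'n" where
  "outer a b = (\<chi> i j. a $ i * b $ j)"

text \<open>Symmetric 2x2 block matrix [[M, c],[c^T, d]] indexed by 'n + unit.\<close>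
definition blockmat :: "real^'n^'n \<Rightarrow> real^'n \<Rightarrow> real \<Rightarrow> real^('n + unit)^('n + unit)" where
  "blockmat M c d = (\<chi> i j. (case i of
       Inl a \<Rightarrow> (case j of Inl b \<Rightarrow> M $ a $ b | Inr _ \<Rightarrow> c $ a)
     | Inr _ \<Rightarrow> (case j of Inl b \<Rightarrow> c $ b | Inr _ \<Rightarrow> d)))"

end

theory Submission
  imports Defs
begin

(*
  For fixed x, i and t the supremum in the first description is taken over the compact ellipsoid
  Xi, so it is at most u - (b^T x + h) iff g(xi) = u - (v - x)^T xi + xi^T A xi is nonnegative on Xi.
  Both g and the ellipsoid constraint H(xi) = (xi - xi0)^T W^-1 (xi - xi0) - 1 are convex and
  H(xi0) < 0, so by Lagrangian duality under Slater's condition (proved by separating a convex set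
  in the plane from the origin) this holds iff g + nu H >= 0 everywhere for some nu >= 0.  That
  inhomogeneous quadratic inequality is exactly positive semidefiniteness of the bordered matrix.
*)

lemma symmetric_matrix_inner_commute:
  fixes M :: "real^'n^'n"
  assumes "transpose M = M"
  shows "x \<bullet> (M *v y) = y \<bullet> (M *v x)"
  by (metis assms dot_lmul_matrix inner_commute transpose_matrix_vector)

lemma quadratic_form_scaleR:
  fixes M :: "real^'n^'n"
  shows "(c *\<^sub>R x) \<bullet> (M *v (c *\<^sub>R x)) = c\<^sup>2 * (x \<bullet> (M *v x))"
  by (simp add: matrix_vector_mult_scaleR power2_eq_square)

lemma convex_on_quadratic:
  fixes M :: "real^'n^'n"
  assumes "\<And>x. 0 \<le> x \<bullet> (M *v x)"
  shows "convex_on UNIV (\<lambda>x. (x - a) \<bullet> (M *v (x - a)) + c \<bullet> x + d)"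
proof (rule convex_onI)
  fix t :: real and x y :: "real^'n"
  assume "0 < t" "t < 1"
  let ?q = "\<lambda>x. (x - a) \<bullet> (M *v (x - a)) + c \<bullet> x + d"
  have "(1 - t) * ?q x + t * ?q y - ?q ((1 - t) *\<^sub>R x + t *\<^sub>R y)
      = t * (1 - t) * ((x - y) \<bullet> (M *v (x - y)))"
    by (simp add: matrix_vector_right_distrib matrix_vector_mult_diff_distrib
        matrix_vector_mult_scaleR inner_add_left inner_add_right inner_diff_left inner_diff_right
        algebra_simps)
  moreover have "0 \<le> t * (1 - t) * ((x - y) \<bullet> (M *v (x - y)))"
    using assms \<open>0 < t\<close> \<open>t < 1\<close> by simp
  ultimately show "?q ((1 - t) *\<^sub>R x + t *\<^sub>R y) \<le> (1 - t) * ?q x + t * ?q y"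
    by linarith
qed simp

lemma psd_add_scaleR:
  assumes "psd A" "psd B" "0 \<le> c"
  shows "psd (A + c *\<^sub>R B)"
proof -
  have "transpose (A + c *\<^sub>R B) = transpose A + c *\<^sub>R transpose B"
    by (simp add: transpose_def vec_eq_iff)
  with assms show ?thesis
    by (simp add: psd_def matrix_vector_mult_add_rdistrib inner_add_right
        scaleR_matrix_vector_assoc[symmetric])
qed

lemma pd_imp_psd: "pd M \<Longrightarrow> psd M"
  unfolding pd_def psd_def by (metis inner_zero_left order.refl less_imp_le)

lemma pd_matrix_inv:
  fixes W :: "real^'n^'n"
  assumes "pd W"
  shows "pd (matrix_inv W)"
proof -
  let ?V = "matrix_inv W"
  have symW: "transpose W = W" using assms by (simp add: pd_def)
  have "\<forall>x. W *v x = 0 \<longrightarrow> x = 0"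
    using assms unfolding pd_def by (metis inner_zero_right less_irrefl)
  then have "invertible W"
    using matrix_left_invertible_ker invertible_left_inverse by blast
  then have inv: "W ** ?V = mat 1" "?V ** W = mat 1"
    unfolding invertible_def matrix_inv_def by (metis (mono_tags, lifting) someI_ex)+
  have "transpose ?V = transpose ?V ** (W ** ?V)" by (simp add: inv matrix_mul_rid)
  also have "\<dots> = transpose (W ** ?V) ** ?V"
    using symW by (metis matrix_mul_assoc matrix_transpose_mul)
  also have "\<dots> = ?V" by (simp add: inv matrix_mul_lid)
  finally have symV: "transpose ?V = ?V" .
  have "0 < y \<bullet> (?V *v y)" if "y \<noteq> 0" for y
  proof -
    define z where "z = ?V *v y"
    have Wz: "W *v z = y" by (simp add: z_def matrix_vector_mul_assoc inv)
    then have "z \<noteq> 0" using that by auto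
    then have "0 < z \<bullet> (W *v z)" using assms by (simp add: pd_def)
    also have "z \<bullet> (W *v z) = y \<bullet> (?V *v y)"
      unfolding Wz by (simp add: z_def inner_commute)
    finally show ?thesis .
  qed
  with symV show ?thesis by (simp add: pd_def)
qed

lemma pd_quadratic_form_ge:
  fixes M :: "real^'n^'n"
  assumes "pd M"
  obtains l where "0 < l" "\<And>x. l * (norm x)\<^sup>2 \<le> x \<bullet> (M *v x)"
proof -
  have "continuous_on (sphere 0 1) (\<lambda>x. x \<bullet> (M *v x))"
    by (intro continuous_intros linear_continuous_on matrix_vector_mul_bounded_linear)
  moreover have "sphere (0::real^'n) 1 \<noteq> {}" by simp
  ultimately obtain x0 where x0: "x0 \<in> sphere 0 1"
    and min: "\<And>x. x \<in> sphere 0 1 \<Longrightarrow> x0 \<bullet> (M *v x0) \<le> x \<bullet> (M *v x)"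
    using continuous_attains_inf[OF compact_sphere] by blast
  have "x0 \<noteq> 0" using x0 by auto
  then have "0 < x0 \<bullet> (M *v x0)" using assms by (simp add: pd_def)
  moreover have "x0 \<bullet> (M *v x0) * (norm x)\<^sup>2 \<le> x \<bullet> (M *v x)" for x
  proof (cases "x = 0")
    case False
    then have "x = norm x *\<^sub>R sgn x" "sgn x \<in> sphere 0 1"
      by (simp_all add: sgn_div_norm norm_sgn)
    then show ?thesis using min[of "sgn x"]
      by (metis mult.commute mult_right_mono quadratic_form_scaleR zero_le_power2)
  qed simp
  ultimately show ?thesis using that by blast
qed

definition ellipsoid :: "real^'n^'n \<Rightarrow> real^'n \<Rightarrow> (real^'n) set" where
  "ellipsoid P c = {\<xi>. (\<xi> - c) \<bullet> (P *v (\<xi> - c)) \<le> 1}"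

lemma centre_in_ellipsoid: "c \<in> ellipsoid P c"
  by (simp add: ellipsoid_def)

lemma compact_ellipsoid:
  assumes "pd P"
  shows "compact (ellipsoid P c)"
proof -
  obtain l where "0 < l" and l: "\<And>x. l * (norm x)\<^sup>2 \<le> x \<bullet> (P *v x)"
    using pd_quadratic_form_ge[OF assms] by blast
  have "ellipsoid P c \<subseteq> cball c (sqrt (1 / l))"
  proof
    fix \<xi> assume "\<xi> \<in> ellipsoid P c"
    then have "l * (norm (\<xi> - c))\<^sup>2 \<le> 1"
      using l[of "\<xi> - c"] by (simp add: ellipsoid_def)
    then have "(norm (\<xi> - c))\<^sup>2 \<le> 1 / l"
      using \<open>0 < l\<close> by (simp add: field_simps)
    then show "\<xi> \<in> cball c (sqrt (1 / l))"
      by (simp add: dist_norm norm_minus_commute real_le_rsqrt)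
  qed
  moreover have "closed (ellipsoid P c)"
    unfolding ellipsoid_def
    by (intro closed_Collect_le continuous_intros
        bounded_linear.continuous_on[OF matrix_vector_mul_bounded_linear])
  ultimately show ?thesis
    using bounded_subset compact_eq_bounded_closed by blast
qed

lemma sum_UNIV_Plus:
  "(\<Sum>i\<in>(UNIV :: ('a::finite + 'b::finite) set). f i) = (\<Sum>a\<in>UNIV. f (Inl a)) + (\<Sum>b\<in>UNIV. f (Inr b))"
  by (subst UNIV_Plus_UNIV[symmetric], subst sum.Plus) (auto simp del: UNIV_Plus_UNIV)

lemma quadratic_form_blockmat:
  fixes M :: "real^'n^'n"
  shows "z \<bullet> (blockmat M c d *v z) = (\<chi> a. z $ Inl a) \<bullet> (M *v (\<chi> a. z $ Inl a))
     + 2 * z $ Inr () * (c \<bullet> (\<chi> a. z $ Inl a)) + d * (z $ Inr ())\<^sup>2"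
  by (simp add: inner_vec_def matrix_vector_mult_def blockmat_def sum_UNIV_Plus
      sum.distrib sum_distrib_left sum_distrib_right algebra_simps power2_eq_square UNIV_unit)

lemma psd_blockmat_iff:
  fixes M :: "real^'n^'n"
  assumes "psd M"
  shows "psd (blockmat M c d) \<longleftrightarrow> (\<forall>\<xi>. 0 \<le> \<xi> \<bullet> (M *v \<xi>) + 2 * (c \<bullet> \<xi>) + d)"
proof
  assume psd: "psd (blockmat M c d)"
  show "\<forall>\<xi>. 0 \<le> \<xi> \<bullet> (M *v \<xi>) + 2 * (c \<bullet> \<xi>) + d"
  proof
    fix \<xi> :: "real^'n"
    define z :: "real^('n + unit)" where "z = (\<chi> i. case i of Inl a \<Rightarrow> \<xi> $ a | Inr _ \<Rightarrow> 1)"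
    have "0 \<le> z \<bullet> (blockmat M c d *v z)" using psd by (simp add: psd_def)
    moreover have "(\<chi> a. z $ Inl a) = \<xi>" "z $ Inr () = 1" by (simp_all add: z_def vec_eq_iff)
    ultimately show "0 \<le> \<xi> \<bullet> (M *v \<xi>) + 2 * (c \<bullet> \<xi>) + d"
      by (simp add: quadratic_form_blockmat)
  qed
next
  assume affine: "\<forall>\<xi>. 0 \<le> \<xi> \<bullet> (M *v \<xi>) + 2 * (c \<bullet> \<xi>) + d"
  have "transpose (blockmat M c d) = blockmat M c d"
    using assms unfolding psd_def transpose_def blockmat_def
    by (simp add: vec_eq_iff split: sum.splits)
  moreover have "0 \<le> z \<bullet> (blockmat M c d *v z)" for z
  proof -
    define y where "y = (\<chi> a. z $ Inl a)"
    define s where "s = z $ Inr ()"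
    have z: "z \<bullet> (blockmat M c d *v z) = y \<bullet> (M *v y) + 2 * s * (c \<bullet> y) + d * s\<^sup>2"
      by (simp add: quadratic_form_blockmat y_def s_def)
    show ?thesis
    proof (cases "s = 0")
      case True
      then show ?thesis using z assms by (simp add: psd_def)
    next
      case False
      define \<xi> where "\<xi> = (1 / s) *\<^sub>R y"
      have y: "y = s *\<^sub>R \<xi>" using False by (simp add: \<xi>_def)
      have "z \<bullet> (blockmat M c d *v z) = s\<^sup>2 * (\<xi> \<bullet> (M *v \<xi>) + 2 * (c \<bullet> \<xi>) + d)"
        unfolding z y quadratic_form_scaleR by (simp add: algebra_simps power2_eq_square)
      then show ?thesis using affine by simp
    qed
  qed
  ultimately show "psd (blockmat M c d)" by (simp add: psd_def)
qed

lemma nonneg_slope_if_bounded_below: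
  fixes a c :: real
  assumes "\<And>s. 0 \<le> s \<Longrightarrow> 0 \<le> c + a * s"
  shows "0 \<le> a"
proof (rule ccontr)
  assume "\<not> 0 \<le> a"
  define s where "s = (\<bar>c\<bar> + 1) / - a"
  have "0 \<le> s" "a * s = - (\<bar>c\<bar> + 1)"
    using \<open>\<not> 0 \<le> a\<close> by (simp_all add: s_def divide_nonneg_neg)
  with assms[of s] show False by linarith
qed

lemma convex_Lagrange_multiplier:
  fixes g h :: "'a::real_vector \<Rightarrow> real"
  assumes g: "convex_on UNIV g" and h: "convex_on UNIV h"
    and slater: "h x0 < 0"
    and imp: "\<And>x. h x \<le> 0 \<Longrightarrow> 0 \<le> g x"
  shows "\<exists>\<nu>\<ge>0. \<forall>x. 0 \<le> g x + \<nu> * h x"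
proof -
  (* K misses the origin by hypothesis; a line through 0 separating it has a nonnegative normal
     (a1, a2), and Slater's point x0 forces a1 > 0. *)
  define K :: "(real \<times> real) set" where "K = {(a, b). \<exists>x. g x < a \<and> h x < b}"
  have "convex K"
  proof (rule convexI)
    fix p q :: "real \<times> real" and u v :: real
    assume "p \<in> K" "q \<in> K" "0 \<le> u" "0 \<le> v" "u + v = 1"
    then obtain x y where x: "g x < fst p" "h x < snd p" and y: "g y < fst q" "h y < snd q"
      by (auto simp: K_def)
    have "g (u *\<^sub>R x + v *\<^sub>R y) \<le> u * g x + v * g y" "h (u *\<^sub>R x + v *\<^sub>R y) \<le> u * h x + v * h y"
      using g h \<open>0 \<le> u\<close> \<open>0 \<le> v\<close> \<open>u + v = 1\<close> by (auto simp: convex_on_def)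
    moreover have "u * g x + v * g y < u * fst p + v * fst q" "u * h x + v * h y < u * snd p + v * snd q"
      using x y \<open>0 \<le> u\<close> \<open>0 \<le> v\<close> \<open>u + v = 1\<close>
      by (smt (verit) mult_left_mono mult_strict_left_mono)+
    ultimately show "u *\<^sub>R p + v *\<^sub>R q \<in> K"
      unfolding K_def by (cases p, cases q) (auto intro!: exI[of _ "u *\<^sub>R x + v *\<^sub>R y"])
  qed
  moreover have "0 \<notin> K"
    using imp by (auto simp: K_def zero_prod_def not_less[symmetric])
  ultimately obtain a1 a2 where a0: "(a1, a2) \<noteq> 0"
    and sep: "\<And>p q. (p, q) \<in> K \<Longrightarrow> 0 \<le> a1 * p + a2 * q"
    using separating_hyperplane_set_0 by (fastforce simp: inner_prod_def)
  have sep': "0 \<le> a1 * (g x + e + s1) + a2 * (h x + e + s2)"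
    if "0 < e" "0 \<le> s1" "0 \<le> s2" for x e s1 s2
    using that by (intro sep) (auto simp: K_def intro!: exI[of _ x])
  have "0 \<le> a1"
  proof (rule nonneg_slope_if_bounded_below)
    show "0 \<le> (a1 * (g x0 + 1) + a2 * (h x0 + 1)) + a1 * s" if "0 \<le> s" for s
      using sep'[of 1 s 0 x0] that by (simp add: algebra_simps)
  qed
  have "0 \<le> a2"
  proof (rule nonneg_slope_if_bounded_below)
    show "0 \<le> (a1 * (g x0 + 1) + a2 * (h x0 + 1)) + a2 * s" if "0 \<le> s" for s
      using sep'[of 1 0 s x0] that by (simp add: algebra_simps)
  qed
  have lagr: "0 \<le> a1 * g x + a2 * h x" for x
  proof (rule field_le_epsilon)
    fix e :: real assume "0 < e"
    define e' where "e' = e / (a1 + a2 + 1)"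
    have "0 < e'" "e' * (a1 + a2) \<le> e"
      using \<open>0 < e\<close> \<open>0 \<le> a1\<close> \<open>0 \<le> a2\<close> by (auto simp: e'_def field_simps)
    moreover have "0 \<le> a1 * (g x + e') + a2 * (h x + e')"
      using sep'[OF \<open>0 < e'\<close>, of 0 0 x] by simp
    ultimately show "0 \<le> a1 * g x + a2 * h x + e"
      by (simp add: algebra_simps)
  qed
  have "0 < a1"
  proof (rule ccontr)
    assume "\<not> 0 < a1"
    with \<open>0 \<le> a1\<close> \<open>0 \<le> a2\<close> a0 have "a1 = 0" "0 < a2" by (auto simp: zero_prod_def)
    with lagr[of x0] mult_pos_neg[of a2 "h x0"] slater show False by simp
  qed
  show ?thesis
  proof (intro exI[of _ "a2 / a1"] conjI allI)
    show "0 \<le> a2 / a1" using \<open>0 < a1\<close> \<open>0 \<le> a2\<close> by simp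
    show "0 \<le> g x + a2 / a1 * h x" for x
      using lagr[of x] \<open>0 < a1\<close> by (simp add: field_simps)
  qed
qed

lemma ellipsoid_S_lemma:
  fixes A P :: "real^'n^'n"
  assumes A: "psd A" and P: "pd P"
  shows "(\<forall>\<xi>\<in>ellipsoid P \<xi>0. c \<bullet> \<xi> - \<xi> \<bullet> (A *v \<xi>) \<le> u) \<longleftrightarrow>
    (\<exists>\<nu>\<ge>0. psd (blockmat (A + \<nu> *\<^sub>R P) (- (1/2) *\<^sub>R ((2 * \<nu>) *\<^sub>R (P *v \<xi>0) + c))
                          (u + \<nu> * (\<xi>0 \<bullet> (P *v \<xi>0)) - \<nu>)))"
    (is "?bound \<longleftrightarrow> (\<exists>\<nu>\<ge>0. psd (?B \<nu>))")
proof -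
  define g where "g \<xi> = u - (c \<bullet> \<xi> - \<xi> \<bullet> (A *v \<xi>))" for \<xi>
  define h where "h \<xi> = (\<xi> - \<xi>0) \<bullet> (P *v (\<xi> - \<xi>0)) - 1" for \<xi>
  have symP: "transpose P = P" using P by (simp add: pd_def)
  (* the bordered quadratic form evaluated at (\<xi>, 1) is the Lagrangian g + \<nu> h *)
  have "\<xi> \<bullet> ((A + \<nu> *\<^sub>R P) *v \<xi>) + 2 * ((- (1/2) *\<^sub>R ((2 * \<nu>) *\<^sub>R (P *v \<xi>0) + c)) \<bullet> \<xi>)
        + (u + \<nu> * (\<xi>0 \<bullet> (P *v \<xi>0)) - \<nu>) = g \<xi> + \<nu> * h \<xi>" for \<nu> \<xi>
    using symmetric_matrix_inner_commute[OF symP, of \<xi>0 \<xi>]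
    by (simp add: g_def h_def matrix_vector_mult_add_rdistrib matrix_vector_mult_diff_distrib
        scaleR_matrix_vector_assoc[symmetric] inner_add_left inner_add_right inner_diff_left
        inner_diff_right inner_commute algebra_simps)
  then have psd_B: "psd (?B \<nu>) \<longleftrightarrow> (\<forall>\<xi>. 0 \<le> g \<xi> + \<nu> * h \<xi>)" if "0 \<le> \<nu>" for \<nu>
    using psd_blockmat_iff[OF psd_add_scaleR[OF A pd_imp_psd[OF P] that]] by simp
  have ellipsoid_h: "\<xi> \<in> ellipsoid P \<xi>0 \<longleftrightarrow> h \<xi> \<le> 0" for \<xi>
    by (simp add: ellipsoid_def h_def)
  have bound_g: "?bound \<longleftrightarrow> (\<forall>\<xi>. h \<xi> \<le> 0 \<longrightarrow> 0 \<le> g \<xi>)"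
    by (auto simp: Ball_def ellipsoid_h g_def)
  show ?thesis
  proof
    assume ?bound
    have "\<exists>\<nu>\<ge>0. \<forall>\<xi>. 0 \<le> g \<xi> + \<nu> * h \<xi>"
    proof (rule convex_Lagrange_multiplier)
      have "convex_on UNIV (\<lambda>\<xi>. (\<xi> - 0) \<bullet> (A *v (\<xi> - 0)) + (- c) \<bullet> \<xi> + u)"
        using A by (intro convex_on_quadratic) (simp add: psd_def)
      moreover have "(\<lambda>\<xi>. (\<xi> - 0) \<bullet> (A *v (\<xi> - 0)) + (- c) \<bullet> \<xi> + u) = g"
        by (simp add: g_def fun_eq_iff)
      ultimately show "convex_on UNIV g" by simp
      have "convex_on UNIV (\<lambda>\<xi>. (\<xi> - \<xi>0) \<bullet> (P *v (\<xi> - \<xi>0)) + 0 \<bullet> \<xi> + - 1)"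
        using pd_imp_psd[OF P] by (intro convex_on_quadratic) (simp add: psd_def)
      then show "convex_on UNIV h" by (simp add: h_def[abs_def])
      show "h \<xi>0 < 0" by (simp add: h_def)
      show "0 \<le> g \<xi>" if "h \<xi> \<le> 0" for \<xi> using \<open>?bound\<close> that bound_g by blast
    qed
    then show "\<exists>\<nu>\<ge>0. psd (?B \<nu>)" using psd_B by blast
  next
    assume "\<exists>\<nu>\<ge>0. psd (?B \<nu>)"
    then obtain \<nu> where "0 \<le> \<nu>" "\<forall>\<xi>. 0 \<le> g \<xi> + \<nu> * h \<xi>" using psd_B by blast
    then show ?bound
      unfolding bound_g by (smt (verit) mult_nonneg_nonpos)
  qed
qed

lemma SUP_ellipsoid_le_iff:
  fixes A P :: "real^'n^'n"
  assumes A: "psd A" and P: "pd P"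
  shows "(SUP \<xi>\<in>ellipsoid P \<xi>0. c \<bullet> \<xi> - \<xi> \<bullet> (A *v \<xi>) - k) \<le> u - k \<longleftrightarrow>
    (\<exists>\<nu>\<ge>0. psd (blockmat (A + \<nu> *\<^sub>R P) (- (1/2) *\<^sub>R ((2 * \<nu>) *\<^sub>R (P *v \<xi>0) + c))
                          (u + \<nu> * (\<xi>0 \<bullet> (P *v \<xi>0)) - \<nu>)))"
proof -
  have "bdd_above ((\<lambda>\<xi>. c \<bullet> \<xi> - \<xi> \<bullet> (A *v \<xi>) - k) ` ellipsoid P \<xi>0)"
    by (intro bounded_imp_bdd_above compact_imp_bounded compact_continuous_image compact_ellipsoid P
        continuous_intros bounded_linear.continuous_on[OF matrix_vector_mul_bounded_linear])
  moreover have "ellipsoid P \<xi>0 \<noteq> {}" using centre_in_ellipsoid by blast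
  ultimately have "(SUP \<xi>\<in>ellipsoid P \<xi>0. c \<bullet> \<xi> - \<xi> \<bullet> (A *v \<xi>) - k) \<le> u - k \<longleftrightarrow>
      (\<forall>\<xi>\<in>ellipsoid P \<xi>0. c \<bullet> \<xi> - \<xi> \<bullet> (A *v \<xi>) \<le> u)"
    by (simp add: cSUP_le_iff)
  also have "\<dots> \<longleftrightarrow> (\<exists>\<nu>\<ge>0. psd (blockmat (A + \<nu> *\<^sub>R P)
      (- (1/2) *\<^sub>R ((2 * \<nu>) *\<^sub>R (P *v \<xi>0) + c)) (u + \<nu> * (\<xi>0 \<bullet> (P *v \<xi>0)) - \<nu>)))"
    using A P by (rule ellipsoid_S_lemma)
  finally show ?thesis .
qed

lemma bchoice2_iff:
  "(\<forall>i\<in>I. \<forall>t\<in>J. \<exists>u v. P i t u v) \<longleftrightarrow> (\<exists>u v. \<forall>i\<in>I. \<forall>t\<in>J. P i t (u i t) (v i t))"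
  by (metis bchoice_iff)

lemma trace_outer: "trace (M ** outer \<xi> \<xi>) = \<xi> \<bullet> ((M::real^'n^'n) *v \<xi>)"
  by (simp add: trace_def matrix_matrix_mult_def outer_def inner_vec_def matrix_vector_mult_def
      sum_distrib_left mult.commute mult.left_commute)

theorem proposition3:
  fixes nrm :: "real^'n \<Rightarrow> real"
    and \<epsilon> \<delta> :: real and N T :: nat
    and \<zeta> :: "nat \<Rightarrow> real^'n"
    and W :: "real^'n^'n" and \<xi>0 :: "real^'n"
    and A :: "nat \<Rightarrow> real^'n^'n" and b :: "nat \<Rightarrow> real^'n" and h :: "nat \<Rightarrow> real"
    and \<Xi> :: "(real^'n) set"
    and f :: "nat \<Rightarrow> real^'n \<Rightarrow> real^'n \<Rightarrow> real"
  assumes norm: "is_norm nrm"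
    and eps: "0 < \<epsilon>" "\<epsilon> < 1"
    and delta: "0 < \<delta>"
    and N_pos: "0 < N"
    and W_pd: "pd W"
    and Xi_def: "\<Xi> = {\<xi>. (\<xi> - \<xi>0) \<bullet> (matrix_inv W *v (\<xi> - \<xi>0)) \<le> 1}"
    and samples: "\<forall>i\<in>{1..N}. \<zeta> i \<in> \<Xi>"
    and A_psd: "\<forall>t\<in>{1..T}. psd (A t)"
    and f_def: "\<forall>t\<in>{1..T}. \<forall>x \<xi>. f t x \<xi> =
                  \<xi> \<bullet> x + trace (A t ** outer \<xi> \<xi>) + b t \<bullet> x + h t"
  shows
   "{x. \<exists>(\<alpha>::nat \<Rightarrow> real) (q::nat \<Rightarrow> nat \<Rightarrow> real) (v::nat \<Rightarrow> nat \<Rightarrow> real^'n).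
          (\<forall>t\<in>{1..T}. 0 < \<alpha> t) \<and>
          (\<forall>i\<in>{1..N}. \<forall>t\<in>{1..T}.
             0 \<le> q i t \<and>
             dual_norm nrm (v i t) * \<delta> + (1 / real N) * (\<Sum>j=1..N. q j t) \<le> \<epsilon> * \<alpha> t \<and>
             (SUP \<xi>\<in>\<Xi>. v i t \<bullet> \<xi> - f t x \<xi>) + \<alpha> t - v i t \<bullet> \<zeta> i - q i t \<le> 0)}
    = {x. \<exists>(\<alpha>::nat \<Rightarrow> real) (q::nat \<Rightarrow> nat \<Rightarrow> real) (v::nat \<Rightarrow> nat \<Rightarrow> real^'n)
           (u::nat \<Rightarrow> nat \<Rightarrow> real) (\<nu>::nat \<Rightarrow> nat \<Rightarrow> real).
          (\<forall>t\<in>{1..T}. 0 < \<alpha> t) \<and>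
          (\<forall>i\<in>{1..N}. \<forall>t\<in>{1..T}.
             0 \<le> q i t \<and> 0 \<le> \<nu> i t \<and>
             dual_norm nrm (v i t) * \<delta> + (1 / real N) * (\<Sum>j=1..N. q j t) \<le> \<epsilon> * \<alpha> t \<and>
             u i t - (b t \<bullet> x + h t) + \<alpha> t - v i t \<bullet> \<zeta> i \<le> q i t \<and>
             psd (blockmat (A t + \<nu> i t *\<^sub>R matrix_inv W)
                    (- (1/2) *\<^sub>R ((2 * \<nu> i t) *\<^sub>R (matrix_inv W *v \<xi>0) + v i t - x))
                    (u i t + \<nu> i t * (\<xi>0 \<bullet> (matrix_inv W *v \<xi>0)) - \<nu> i t)))}"
proof -
  let ?Wi = "matrix_inv W"
  have pd_Wi: "pd ?Wi" using W_pd by (rule pd_matrix_inv)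
  have Xi: "\<Xi> = ellipsoid ?Wi \<xi>0" using Xi_def by (simp add: ellipsoid_def)
  have f_eq: "w \<bullet> \<xi> - f t x \<xi> = (w - x) \<bullet> \<xi> - \<xi> \<bullet> (A t *v \<xi>) - (b t \<bullet> x + h t)"
    if "t \<in> {1..T}" for t w x \<xi>
    using f_def that by (simp add: trace_outer inner_diff_left inner_diff_right inner_commute)
  have SUP_bound_iff: "(SUP \<xi>\<in>\<Xi>. w \<bullet> \<xi> - f t x \<xi>) \<le> u - (b t \<bullet> x + h t) \<longleftrightarrow>
      (\<exists>\<nu>\<ge>0. psd (blockmat (A t + \<nu> *\<^sub>R ?Wi) (- (1/2) *\<^sub>R ((2 * \<nu>) *\<^sub>R (?Wi *v \<xi>0) + w - x))
                          (u + \<nu> * (\<xi>0 \<bullet> (?Wi *v \<xi>0)) - \<nu>)))"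
    if "t \<in> {1..T}" for t w x u
    using SUP_ellipsoid_le_iff[OF bspec[OF A_psd that] pd_Wi]
    by (simp add: Xi f_eq[OF that] add_diff_eq)
  have pointwise: "(SUP \<xi>\<in>\<Xi>. w \<bullet> \<xi> - f t x \<xi>) + a - w \<bullet> z - q \<le> 0 \<longleftrightarrow>
      (\<exists>u \<nu>. 0 \<le> \<nu> \<and> u - (b t \<bullet> x + h t) + a - w \<bullet> z \<le> q \<and>
        psd (blockmat (A t + \<nu> *\<^sub>R ?Wi) (- (1/2) *\<^sub>R ((2 * \<nu>) *\<^sub>R (?Wi *v \<xi>0) + w - x))
                          (u + \<nu> * (\<xi>0 \<bullet> (?Wi *v \<xi>0)) - \<nu>)))"
    (is "?S + a - w \<bullet> z - q \<le> 0 \<longleftrightarrow> _")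
    if "t \<in> {1..T}" for t w x a z q
    using SUP_bound_iff[OF that, of w x "?S + (b t \<bullet> x + h t)"] SUP_bound_iff[OF that, of w x]
    by (smt (verit))
  show ?thesis
    by (simp only: pointwise ex_simps(2)[symmetric] bchoice2_iff cong: ball_cong)
      (simp only: ex_simps(2)[symmetric] conj_ac)
qed

end
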